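(* For every planar forest $F$, $\Delta(F)=\sum_{c\in \mathrm{Adm}^l(F)}P^c(F)\otimes R^c(F)+F\otimes 1+1\otimes F$.
   Context: Planar rooted trees have their children linearly ordered left to right; a planar forest is a finite, possibly empty, sequence of planar rooted trees ($1$ = empty forest); $\mathcal{H}$ is the free associative unital algebra over a field $K$ on planar rooted trees, with basis the planar forests and product concatenation. $B^+(F)$ is the tree obtained by grafting the trees of the forest $F$ (in order) on a new common root; $\varepsilon(F)=\delta_{F,1}$. $\Delta:\mathcal{H}\to\mathcal{H}\otimes\mathcal{H}$ is the unique linear map with $\Delta(1)=1\otimes1$, $\Delta(xy)=(x\otimes1)\Delta(y)+\Delta(x)(1\otimes y)-x\otimes y$ and $\Delta(B^+(x))=B^+(x)\otimes 1+(\mathrm{Id}\otimes B^+)\Delta(x)$ for all $x,y\in\mathcal{H}$. Orders on the vertices of a nonempty forest $F=t_1\cdots t_n$: $s\geq_{high}s'$ iff $s'=s$ or $s'$ is an ancestor of $s$. If $s,s'$ are incomparable for $\geq_{high}$, then $s\geq_{left}s'$ iff either $s\in t_i$, $s'\in t_j$ with $i<j$, or $s,s'$ lie in the same $t_i$ and $s\geq_{left}s'$ in the forest obtained from $t_i$ by deleting its root (recursive definition). $s\geq_{h,l}s'$ iff $s\geq_{high}s'$ or $s\geq_{left}s'$; this is a total order. Admissible cuts: add to each tree of $F$ an imaginary edge below its root. An admissible cut $c$ is a nonempty set of edges (real edges or imaginary root-edges) such that every path from the base of a tree to a leaf contains at most one edge of $c$, and which is not the total cut (consisting of all root-edges). $P^c(F)$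 is the planar forest formed by the vertices lying above an edge of $c$ (i.e. whose path to the base contains an edge of $c$), and $R^c(F)$ the planar forest formed by the remaining vertices, with induced edges and left-right orders. Writing the vertices of $F$ as $s_1\geq_{h,l}\cdots\geq_{h,l}s_n$, an admissible cut $c$ is left-admissible if there is $k$ such that the vertices of $P^c(F)$ are exactly $s_1,\dots,s_k$; $\mathrm{Adm}^l(F)$ is the set of left-admissible cuts. *)

theory Defs
  imports Main "HOL-Library.Poly_Mapping" "HOL-Library.Sublist"
begin

text \<open>A planar rooted tree is a root together with the (left-to-right ordered)
  list of its subtrees; a planar forest is a list of planar rooted trees.
  The empty forest is the unit 1.\<close>

datatype ptree = Node "ptree list"

type_synonym forest = "ptree list"

definition Bplus_f :: "forest \<Rightarrow> forest" where
  "Bplus_f F = [Node F]"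

text \<open>H: finitely supported K-linear combinations of planar forests.
  H tensor H: finitely supported K-linear combinations of pairs of forests
  (the pair (F,G) standing for F tensor G).\<close>

type_synonym 'k H = "forest \<Rightarrow>\<^sub>0 'k"
type_synonym 'k HH = "(forest \<times> forest) \<Rightarrow>\<^sub>0 'k"

definition cmul :: "'k::field \<Rightarrow> ('a \<Rightarrow>\<^sub>0 'k) \<Rightarrow> ('a \<Rightarrow>\<^sub>0 'k)" where
  "cmul c x = Poly_Mapping.map (\<lambda>a. c * a) x"

definition lin :: "('a \<Rightarrow> ('b \<Rightarrow>\<^sub>0 'k::field)) \<Rightarrow> ('a \<Rightarrow>\<^sub>0 'k) \<Rightarrow> ('b \<Rightarrow>\<^sub>0 'k)" where
  "lin f x = (\<Sum>a \<in> Poly_Mapping.keys x. cmul (Poly_Mapping.lookup x a) (f a))"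

definition basis :: "'a \<Rightarrow> ('a \<Rightarrow>\<^sub>0 'k::field)" where
  "basis a = Poly_Mapping.single a 1"

definition hone :: "'k::field H" where
  "hone = basis []"

definition hmult :: "'k::field H \<Rightarrow> 'k H \<Rightarrow> 'k H" where
  "hmult x y = lin (\<lambda>F. lin (\<lambda>G. basis (F @ G)) y) x"

definition Bplus :: "'k::field H \<Rightarrow> 'k H" where
  "Bplus x = lin (\<lambda>F. basis (Bplus_f F)) x"

definition tens :: "'k::field H \<Rightarrow> 'k H \<Rightarrow> 'k HH" where
  "tens x y = lin (\<lambda>F. lin (\<lambda>G. basis (F, G)) y) x"

definition tmult :: "'k::field HH \<Rightarrow> 'k HH \<Rightarrow> 'k HH" where
  "tmult u v = lin (\<lambda>(F1, G1). lin (\<lambda>(F2, G2). basis (F1 @ F2, G1 @ G2)) v) u"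

definition id_Bplus :: "'k::field HH \<Rightarrow> 'k HH" where
  "id_Bplus u = lin (\<lambda>(F, G). basis (F, Bplus_f G)) u"

text \<open>A linear map Delta: H \<rightarrow> H tensor H is given by its values D on the basis
  of forests, Delta = lin D. It is the coproduct of the statement iff it
  satisfies the three defining identities.\<close>
definition is_coproduct :: "(forest \<Rightarrow> 'k::field HH) \<Rightarrow> bool" where
  "is_coproduct D \<longleftrightarrow>
     lin D hone = tens hone hone \<and>
     (\<forall>x y. lin D (hmult x y) =
        tmult (tens x hone) (lin D y) + tmult (lin D x) (tens hone y) - tens x y) \<and>
     (\<forall>x. lin D (Bplus x) = tens (Bplus x) hone + id_Bplus (lin D x))"

text \<open>Vertices of a forest are addressed by paths: [i] is the root of the i-th
  tree (counting from 0), and p @ [j] is the j-th child of vertex p.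
  The edge (real or imaginary) just below a vertex v is identified with v,
  so a set of edges is a set of vertices.\<close>

fun is_vertex :: "forest \<Rightarrow> nat list \<Rightarrow> bool" where
  "is_vertex ts [] = False"
| "is_vertex ts (i # p) =
     (i < length ts \<and> (case ts ! i of Node cs \<Rightarrow> p = [] \<or> is_vertex cs p))"

definition vertices :: "forest \<Rightarrow> nat list set" where
  "vertices F = {p. is_vertex F p}"

definition geq_high :: "nat list \<Rightarrow> nat list \<Rightarrow> bool" where
  "geq_high s s' \<longleftrightarrow> prefix s' s"

text \<open>The recursive left order (used only for high-incomparable vertices):
  compare the indices of the trees containing the vertices; if equal, recurse
  in the forest obtained by deleting the common root.\<close>
fun geq_left :: "nat list \<Rightarrow> nat list \<Rightarrow> bool" where
  "geq_left (i # s) (j # s') = (i < j \<or> (i = j \<and> geq_left s s'))"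
| "geq_left _ _ = False"

definition geq_hl :: "nat list \<Rightarrow> nat list \<Rightarrow> bool" where
  "geq_hl s s' \<longleftrightarrow> geq_high s s' \<or>
     (\<not> geq_high s s' \<and> \<not> geq_high s' s \<and> geq_left s s')"

definition roots :: "forest \<Rightarrow> nat list set" where
  "roots F = {[i] | i. i < length F}"

text \<open>Admissible cuts: nonempty sets of edges, at most one on each
  base-to-leaf path (i.e. pairwise not in ancestor relation), not the total cut.\<close>
definition admissible :: "forest \<Rightarrow> nat list set \<Rightarrow> bool" where
  "admissible F c \<longleftrightarrow> c \<subseteq> vertices F \<and> c \<noteq> {} \<and>
     (\<forall>u\<in>c. \<forall>v\<in>c. prefix u v \<longrightarrow> u = v) \<and> c \<noteq> roots F"

definition above :: "forest \<Rightarrow> nat list set \<Rightarrow> nat list set" where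
  "above F c = {v \<in> vertices F. \<exists>u\<in>c. prefix u v}"

text \<open>Restriction of a forest to a set S of vertices: vertices outside S are
  deleted; for S closed upwards or closed downwards this is the forest formed by
  the vertices of S with induced edges and left-right orders.
  restr S p i ts: ts is the list of trees whose roots have addresses
  p @ [i], p @ [i+1], ...\<close>
fun restr :: "(nat list \<Rightarrow> bool) \<Rightarrow> nat list \<Rightarrow> nat \<Rightarrow> forest \<Rightarrow> forest" where
  "restr S p i [] = []"
| "restr S p i (Node cs # ts) =
     (if S (p @ [i]) then [Node (restr S (p @ [i]) 0 cs)] else restr S (p @ [i]) 0 cs)
     @ restr S p (Suc i) ts"

definition Pc :: "forest \<Rightarrow> nat list set \<Rightarrow> forest" where
  "Pc F c = restr (\<lambda>v. v \<in> above F c) [] 0 F"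

definition Rc :: "forest \<Rightarrow> nat list set \<Rightarrow> forest" where
  "Rc F c = restr (\<lambda>v. v \<notin> above F c) [] 0 F"

definition left_admissible :: "forest \<Rightarrow> nat list set \<Rightarrow> bool" where
  "left_admissible F c \<longleftrightarrow> admissible F c \<and>
     (\<exists>ss k. distinct ss \<and> set ss = vertices F \<and> sorted_wrt geq_hl ss \<and>
            above F c = set (take k ss))"

definition Adm_l :: "forest \<Rightarrow> nat list set set" where
  "Adm_l F = {c. left_admissible F c}"

end

theory Submission
  imports Defs
begin

text \<open>The defining identities determine the coproduct by induction on the forest: writing
  \<open>Node cs # ts = B\<^sup>+(cs) \<cdot> ts\<close>, they express \<open>\<Delta>\<close> of the forest through \<open>\<Delta>(cs)\<close> and
  \<open>\<Delta>(ts)\<close>, giving a sum over a recursively defined list \<open>splits\<close> of pairs \<open>(P, R)\<close>.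
  Enumerating the vertices in post-order (children first, then the node, then the right
  siblings) lists them decreasingly for \<open>\<ge>\<^sub>h\<^sub>,\<^sub>l\<close>, and the \<open>k\<close>-th entry of \<open>splits\<close> is
  obtained by cutting off the first \<open>k\<close> vertices. Left-admissible cuts are exactly the
  cuts whose upper part is such an initial segment with \<open>0 < k < n\<close>; the two extreme
  values of \<open>k\<close> contribute \<open>1 \<otimes> F\<close> and \<open>F \<otimes> 1\<close>.\<close>

lemma lookup_cmul: "Poly_Mapping.lookup (cmul c x) a = c * Poly_Mapping.lookup x a"
  by (simp add: cmul_def Poly_Mapping.map.rep_eq when_def)

lemma cmul_add_left: "cmul (c + d) x = cmul c x + cmul d x"
  by (rule poly_mapping_eqI) (simp add: lookup_cmul lookup_add algebra_simps)

lemma cmul_zero_left [simp]: "cmul 0 x = 0"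
  by (rule poly_mapping_eqI) (simp add: lookup_cmul)

lemma cmul_one [simp]: "cmul 1 x = x"
  by (rule poly_mapping_eqI) (simp add: lookup_cmul)

lemma lin_eq_sum_superset:
  "finite S \<Longrightarrow> Poly_Mapping.keys x \<subseteq> S \<Longrightarrow>
     lin f x = (\<Sum>a\<in>S. cmul (Poly_Mapping.lookup x a) (f a))"
  unfolding lin_def by (rule sum.mono_neutral_left) (auto simp: in_keys_iff)

lemma lin_add: "lin f (x + y) = lin f x + lin f y"
proof -
  let ?S = "Poly_Mapping.keys x \<union> Poly_Mapping.keys y"
  have "Poly_Mapping.keys (x + y) \<subseteq> ?S"
    by (auto simp: in_keys_iff lookup_add)
  then show ?thesis
    by (subst (1 2 3) lin_eq_sum_superset[of ?S])
      (auto simp: lookup_add cmul_add_left sum.distrib)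
qed

lemma lin_zero [simp]: "lin f 0 = 0"
  by (simp add: lin_def)

lemma lin_basis [simp]: "lin f (basis a) = f a"
  by (simp add: lin_def basis_def)

lemma lin_sum_list: "lin f (sum_list xs) = sum_list (map (lin f) xs)"
  by (induction xs) (auto simp: lin_add)

lemma lin_sum_list_basis: "lin f (sum_list (map basis xs)) = sum_list (map f xs)"
  by (simp add: lin_sum_list o_def)

lemma tens_basis [simp]: "tens (basis a) (basis b) = basis (a, b)"
  by (simp add: tens_def)

lemma hmult_basis [simp]: "hmult (basis a) (basis b) = basis (a @ b)"
  by (simp add: hmult_def)

lemma Bplus_basis [simp]: "Bplus (basis a) = basis [Node a]"
  by (simp add: Bplus_def Bplus_f_def)

lemma tmult_add_left: "tmult (x + y) v = tmult x v + tmult y v"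
  by (simp add: tmult_def lin_add)

lemma tmult_basis_left: "tmult (basis (a, b)) v = lin (\<lambda>(F, G). basis (a @ F, b @ G)) v"
  by (simp add: tmult_def)

lemma tmult_basis_right: "tmult u (basis (a, b)) = lin (\<lambda>(F, G). basis (F @ a, G @ b)) u"
  by (simp add: tmult_def case_prod_beta)

section \<open>The coproduct as a sum over splittings\<close>

fun splits :: "forest \<Rightarrow> (forest \<times> forest) list" where
  "splits [] = [([], [])]"
| "splits (Node cs # ts) =
     map (\<lambda>(P, R). (P, Node R # ts)) (splits cs) @ map (\<lambda>(P, R). (Node cs # P, R)) (splits ts)"

lemma coproduct_basis_eq_splits:
  fixes D :: "forest \<Rightarrow> 'k::field HH"
  assumes D: "is_coproduct D"
  shows "lin D (basis F) = sum_list (map basis (splits F))"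
proof (induction F rule: splits.induct)
  case 1
  then show ?case using D by (simp add: is_coproduct_def hone_def)
next
  case (2 cs ts)
  have mult: "lin D (hmult x y) =
      tmult (tens x hone) (lin D y) + tmult (lin D x) (tens hone y) - tens x y" for x y
    using D by (simp add: is_coproduct_def)
  have graft: "lin D (Bplus x) = tens (Bplus x) hone + id_Bplus (lin D x)" for x
    using D by (simp add: is_coproduct_def)
  have tree: "lin D (basis [Node cs]) =
      basis ([Node cs], []) + sum_list (map (\<lambda>(P, R). basis (P, [Node R])) (splits cs))"
    using graft[of "basis cs"] 2(1) by (simp add: hone_def id_Bplus_def lin_sum_list_basis Bplus_f_def)
  have "lin D (basis (Node cs # ts)) = lin D (hmult (basis [Node cs]) (basis ts))"
    by simp
  also have "\<dots> = tmult (basis ([Node cs], [])) (sum_list (map basis (splits ts)))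
      + tmult (lin D (basis [Node cs])) (basis ([], ts)) - basis ([Node cs], ts)"
    using 2(2) by (subst mult) (simp add: hone_def)
  also have "\<dots> = sum_list (map basis (splits (Node cs # ts)))"
    unfolding tree tmult_add_left
    by (simp add: tmult_basis_left tmult_basis_right lin_sum_list_basis lin_sum_list
        o_def case_prod_beta)
  finally show ?case .
qed

fun num_vertices :: "forest \<Rightarrow> nat" where
  "num_vertices [] = 0"
| "num_vertices (Node cs # ts) = Suc (num_vertices cs + num_vertices ts)"

lemma length_splits: "length (splits F) = Suc (num_vertices F)"
  by (induction F rule: splits.induct) auto

lemma nth_splits_0: "splits F ! 0 = ([], F)"
proof (induction F rule: splits.induct)
  case (2 cs ts)
  then show ?case
    using length_splits[of cs] by (simp add: nth_append case_prod_beta)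
qed simp

lemma nth_splits_num_vertices: "splits F ! num_vertices F = (F, [])"
  by (induction F rule: splits.induct) (auto simp: nth_append length_splits case_prod_beta)

lemma nth_splits_Node_low:
  "k \<le> num_vertices cs \<Longrightarrow>
     splits (Node cs # ts) ! k = (fst (splits cs ! k), Node (snd (splits cs ! k)) # ts)"
  by (simp add: nth_append length_splits case_prod_beta)

lemma nth_splits_Node_high:
  "l \<le> num_vertices ts \<Longrightarrow>
     splits (Node cs # ts) ! (Suc (num_vertices cs) + l) =
       (Node cs # fst (splits ts ! l), snd (splits ts ! l))"
  by (simp add: nth_append length_splits case_prod_beta)

section \<open>Post-order enumeration of the vertices\<close>

text \<open>\<open>post p i ts\<close> enumerates the vertices of the trees \<open>ts\<close>, whose roots have the addresses
  \<open>p @ [i]\<close>, \<open>p @ [i + 1]\<close>, \<dots>, matching the addressing used by \<open>restr\<close>.\<close>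

fun post :: "nat list \<Rightarrow> nat \<Rightarrow> forest \<Rightarrow> nat list list" where
  "post p i [] = []"
| "post p i (Node cs # ts) = post (p @ [i]) 0 cs @ [p @ [i]] @ post p (Suc i) ts"

lemma length_post: "length (post p i F) = num_vertices F"
  by (induction p i F rule: post.induct) auto

lemma mem_post: "v \<in> set (post p i F) \<longleftrightarrow> (\<exists>j q. v = p @ (i + j) # q \<and> is_vertex F (j # q))"
proof (induction p i F arbitrary: v rule: post.induct)
  case (2 p i cs ts)
  show ?case
  proof
    assume "v \<in> set (post p i (Node cs # ts))"
    then consider "v \<in> set (post (p @ [i]) 0 cs)" | "v = p @ [i]" | "v \<in> set (post p (Suc i) ts)"
      by auto
    then show "\<exists>j q. v = p @ (i + j) # q \<and> is_vertex (Node cs # ts) (j # q)"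
    proof cases
      case 1
      then obtain j q where "v = (p @ [i]) @ (0 + j) # q" "is_vertex cs (j # q)"
        using 2(1) by blast
      then show ?thesis by (intro exI[of _ 0] exI[of _ "j # q"]) simp
    next
      case 3
      then obtain j q where "v = p @ (Suc i + j) # q" "is_vertex ts (j # q)"
        using 2(2) by blast
      then show ?thesis by (intro exI[of _ "Suc j"] exI[of _ q]) simp
    qed (intro exI[of _ 0] exI[of _ "[]"], simp)
  next
    assume "\<exists>j q. v = p @ (i + j) # q \<and> is_vertex (Node cs # ts) (j # q)"
    then obtain j q where v: "v = p @ (i + j) # q" and "is_vertex (Node cs # ts) (j # q)"
      by blast
    then consider "j = 0" "q = []" | j' q' where "j = 0" "q = j' # q'" "is_vertex cs (j' # q')"
      | j' where "j = Suc j'" "is_vertex ts (j' # q)"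
      by (cases j; cases q) auto
    then show "v \<in> set (post p i (Node cs # ts))"
      using v 2(1)[of v] 2(2)[of v] by cases auto
  qed
qed simp

lemma distinct_post: "distinct (post p i F)"
proof (induction p i F rule: post.induct)
  case (2 p i cs ts)
  then show ?case by (auto simp: mem_post)
qed simp

lemma geq_left_append: "geq_left (p @ s) (p @ s') = geq_left s s'"
  by (induction p) auto

lemma geq_left_asym: "geq_left s s' \<Longrightarrow> \<not> geq_left s' s"
  by (induction s s' rule: geq_left.induct) auto

lemma geq_hl_antisym: "geq_hl s s' \<Longrightarrow> geq_hl s' s \<Longrightarrow> s = s'"
  unfolding geq_hl_def geq_high_def using geq_left_asym prefix_order.antisym by blast

lemma sorted_post: "sorted_wrt geq_hl (post p i F)"
proof (induction p i F rule: post.induct)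
  case (2 p i cs ts)
  have "geq_hl x (p @ [i])" if "x \<in> set (post (p @ [i]) 0 cs)" for x
    using that by (auto simp: mem_post geq_hl_def geq_high_def)
  moreover have "geq_hl x y" if "x \<in> set (post (p @ [i]) 0 cs) \<union> {p @ [i]}"
    and "y \<in> set (post p (Suc i) ts)" for x y
    using that by (auto simp: mem_post geq_hl_def geq_high_def geq_left_append)
  ultimately show ?case using 2 by (auto simp: sorted_wrt_append)
qed simp

lemma sorted_wrt_distinct_set_unique:
  assumes "distinct xs" "distinct ys" "set xs = set ys" "sorted_wrt R xs" "sorted_wrt R ys"
    and antisym: "\<And>a b. R a b \<Longrightarrow> R b a \<Longrightarrow> a = b"
  shows "xs = ys"
  using assms(1-5)
proof (induction xs arbitrary: ys)
  case (Cons x xs)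
  then obtain y ys' where ys: "ys = y # ys'" by (cases ys) auto
  have "x = y"
  proof (rule ccontr)
    assume "x \<noteq> y"
    then have "R x y" "R y x" using Cons.prems ys by auto
    with \<open>x \<noteq> y\<close> antisym show False by blast
  qed
  with Cons.prems ys have "set xs = set ys'" by auto
  with Cons ys \<open>x = y\<close> show ?case by auto
qed simp

lemma restr_eq_self: "\<forall>v\<in>set (post p i F). S v \<Longrightarrow> restr S p i F = F"
  by (induction p i F rule: post.induct) auto

lemma restr_eq_Nil: "\<forall>v\<in>set (post p i F). \<not> S v \<Longrightarrow> restr S p i F = []"
  by (induction p i F rule: post.induct) auto

lemma restr_post_initial_segment:
  assumes "k \<le> num_vertices F"
    and "\<forall>v\<in>set (post p i F). S v \<longleftrightarrow> v \<in> set (take k (post p i F))"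
  shows "restr S p i F = fst (splits F ! k) \<and> restr (\<lambda>v. \<not> S v) p i F = snd (splits F ! k)"
  using assms
proof (induction p i F arbitrary: k rule: post.induct)
  case (2 p i cs ts)
  let ?L = "post (p @ [i]) 0 cs" and ?R = "post p (Suc i) ts"
  have post: "post p i (Node cs # ts) = ?L @ [p @ [i]] @ ?R" by simp
  have dist: "distinct (?L @ [p @ [i]] @ ?R)" using distinct_post post by metis
  show ?case
  proof (cases "k \<le> num_vertices cs")
    case True
    then have "take k (post p i (Node cs # ts)) = take k ?L" by (simp add: length_post)
    with 2(4) have "\<forall>v\<in>set (?L @ [p @ [i]] @ ?R). S v \<longleftrightarrow> v \<in> set (take k ?L)"
      by (simp only: post)
    with dist have "\<forall>v\<in>set ?L. S v \<longleftrightarrow> v \<in> set (take k ?L)"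
      and "\<forall>v\<in>set ?R. \<not> S v" and "\<not> S (p @ [i])"
      by (auto dest: in_set_takeD)
    with 2(1)[OF True] show ?thesis
      unfolding nth_splits_Node_low[OF True] by (simp add: restr_eq_self restr_eq_Nil)
  next
    case False
    then obtain l where k: "k = Suc (num_vertices cs) + l"
      by (metis add_Suc less_imp_Suc_add not_le)
    then have l: "l \<le> num_vertices ts" using 2(3) by simp
    have "take k (post p i (Node cs # ts)) = ?L @ [p @ [i]] @ take l ?R"
      using k by (simp add: length_post)
    with 2(4) have "\<forall>v\<in>set (?L @ [p @ [i]] @ ?R). S v \<longleftrightarrow> v \<in> set (?L @ [p @ [i]] @ take l ?R)"
      by (simp only: post)
    with dist have "\<forall>v\<in>set ?R. S v \<longleftrightarrow> v \<in> set (take l ?R)"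
      and "\<forall>v\<in>set ?L. S v" and "S (p @ [i])"
      by (auto dest: in_set_takeD)
    with 2(2)[OF l] show ?thesis
      unfolding k nth_splits_Node_high[OF l] by (simp add: restr_eq_self restr_eq_Nil)
  qed
qed simp

definition hl_enum :: "forest \<Rightarrow> nat list list" where
  "hl_enum F = post [] 0 F"

lemma set_hl_enum: "set (hl_enum F) = vertices F"
proof -
  have "v \<in> set (hl_enum F) \<longleftrightarrow> is_vertex F v" for v
    unfolding hl_enum_def mem_post by (cases v) auto
  then show ?thesis unfolding vertices_def by auto
qed

lemma distinct_hl_enum: "distinct (hl_enum F)"
  unfolding hl_enum_def by (rule distinct_post)

lemma sorted_hl_enum: "sorted_wrt geq_hl (hl_enum F)"
  unfolding hl_enum_def by (rule sorted_post)

lemma length_hl_enum: "length (hl_enum F) = num_vertices F"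
  unfolding hl_enum_def by (rule length_post)

lemma card_set_take_hl_enum: "card (set (take k (hl_enum F))) = min k (num_vertices F)"
  using distinct_hl_enum[of F] by (simp add: distinct_card length_hl_enum)

lemma hl_enum_unique:
  "distinct ss \<Longrightarrow> set ss = vertices F \<Longrightarrow> sorted_wrt geq_hl ss \<Longrightarrow> ss = hl_enum F"
  by (rule sorted_wrt_distinct_set_unique[where R = geq_hl])
    (auto simp: distinct_hl_enum sorted_hl_enum set_hl_enum geq_hl_antisym)

text \<open>An initial segment for \<open>\<ge>\<^sub>h\<^sub>,\<^sub>l\<close> is closed under taking descendants, since a
  descendant is \<open>\<ge>\<^sub>h\<^sub>i\<^sub>g\<^sub>h\<close> its ancestor.\<close>

lemma take_hl_enum_upward_closed:
  assumes v: "v \<in> set (take k (hl_enum F))" and "prefix v w" and w: "w \<in> vertices F"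
  shows "w \<in> set (take k (hl_enum F))"
proof -
  let ?xs = "hl_enum F"
  obtain b where b: "b < k" "b < length ?xs" "?xs ! b = v"
    using v by (auto simp: in_set_conv_nth)
  obtain a where a: "a < length ?xs" "?xs ! a = w"
    using w by (auto simp: in_set_conv_nth set_hl_enum[symmetric])
  show ?thesis
  proof (cases "a < k")
    case True
    then show ?thesis using a by (auto simp: in_set_conv_nth)
  next
    case False
    with b have "b < a" by simp
    with a b have "geq_hl v w" using sorted_hl_enum[of F] by (auto simp: sorted_wrt_iff_nth_less)
    moreover have "geq_hl w v" using \<open>prefix v w\<close> by (simp add: geq_hl_def geq_high_def)
    ultimately have "a = b"
      using a b distinct_hl_enum[of F] geq_hl_antisym by (metis nth_eq_iff_index_eq)
    with \<open>b < a\<close> show ?thesis by simp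
  qed
qed

text \<open>The cut recovered from the set \<open>A\<close> of vertices above it: the edges just below the
  lowest vertices of \<open>A\<close>.\<close>

definition prefix_minimal :: "nat list set \<Rightarrow> nat list set" where
  "prefix_minimal A = {v \<in> A. \<forall>u\<in>A. prefix u v \<longrightarrow> u = v}"

lemma prefix_minimal_antichain: "\<forall>u\<in>prefix_minimal A. \<forall>v\<in>prefix_minimal A. prefix u v \<longrightarrow> u = v"
  unfolding prefix_minimal_def by auto

lemma above_prefix_minimal:
  assumes sub: "A \<subseteq> vertices F"
    and closed: "\<And>v w. v \<in> A \<Longrightarrow> prefix v w \<Longrightarrow> w \<in> vertices F \<Longrightarrow> w \<in> A"
  shows "above F (prefix_minimal A) = A"
proof
  show "above F (prefix_minimal A) \<subseteq> A"
    unfolding above_def prefix_minimal_def using closed by auto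
next
  show "A \<subseteq> above F (prefix_minimal A)"
  proof
    fix v assume v: "v \<in> A"
    define m where "m = (LEAST m. take m v \<in> A)"
    have ex: "take (length v) v \<in> A" using v by simp
    have m: "take m v \<in> A" "m \<le> length v"
      unfolding m_def by (rule LeastI[where P = "\<lambda>m. take m v \<in> A", OF ex],
          rule Least_le[where P = "\<lambda>m. take m v \<in> A", OF ex])
    have "take m v \<in> prefix_minimal A"
      unfolding prefix_minimal_def
    proof (intro CollectI conjI ballI impI m(1))
      fix u assume u: "u \<in> A" "prefix u (take m v)"
      then have "length u \<le> m" using m(2) by (metis length_take min.absorb2 prefix_length_le)
      moreover have "u = take (length u) v"
        using u(2) \<open>length u \<le> m\<close> by (metis prefix_def append_eq_conv_conj take_take min.absorb1)
      moreover from this have "m \<le> length u" unfolding m_def using u(1) by (metis Least_le)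
      ultimately show "u = take m v" by simp
    qed
    then show "v \<in> above F (prefix_minimal A)"
      using v sub unfolding above_def by (auto intro: take_is_prefix)
  qed
qed

lemma prefix_minimal_above:
  assumes "c \<subseteq> vertices F" and antichain: "\<forall>u\<in>c. \<forall>v\<in>c. prefix u v \<longrightarrow> u = v"
  shows "prefix_minimal (above F c) = c"
proof
  show "prefix_minimal (above F c) \<subseteq> c"
  proof
    fix v assume "v \<in> prefix_minimal (above F c)"
    then have v: "v \<in> above F c" "\<forall>u\<in>above F c. prefix u v \<longrightarrow> u = v"
      unfolding prefix_minimal_def by auto
    then obtain u where "u \<in> c" "prefix u v" unfolding above_def by auto
    moreover from this have "u \<in> above F c" using assms(1) unfolding above_def by auto
    ultimately show "v \<in> c" using v(2) by auto
  qed
next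
  show "c \<subseteq> prefix_minimal (above F c)"
  proof
    fix v assume v: "v \<in> c"
    have "u = v" if "u \<in> above F c" "prefix u v" for u
    proof -
      obtain w where "w \<in> c" "prefix w u" using \<open>u \<in> above F c\<close> unfolding above_def by auto
      with antichain v \<open>prefix u v\<close> have "w = v" by (meson prefix_order.trans)
      with \<open>prefix w u\<close> \<open>prefix u v\<close> show ?thesis by (auto dest: prefix_order.antisym)
    qed
    with v assms(1) show "v \<in> prefix_minimal (above F c)"
      unfolding prefix_minimal_def above_def by auto
  qed
qed

lemma vertex_ConsE:
  assumes "v \<in> vertices F"
  obtains i q where "v = i # q" "[i] \<in> roots F"
proof -
  from assms obtain i q where "v = i # q" "is_vertex F (i # q)"
    unfolding vertices_def by (cases v) auto
  then show ?thesis using that unfolding roots_def by auto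
qed

lemma roots_subset_vertices: "roots F \<subseteq> vertices F"
  unfolding roots_def vertices_def by (auto split: ptree.split)

lemma above_roots: "above F (roots F) = vertices F"
proof -
  have "v \<in> above F (roots F)" if v: "v \<in> vertices F" for v
  proof -
    obtain i q where "v = i # q" "[i] \<in> roots F" using v by (rule vertex_ConsE)
    moreover have "prefix [i] (i # q)" by simp
    ultimately show ?thesis using v unfolding above_def by blast
  qed
  then show ?thesis unfolding above_def by blast
qed

lemma above_eq_vertices_imp_roots:
  assumes c: "c \<subseteq> vertices F" and antichain: "\<forall>u\<in>c. \<forall>v\<in>c. prefix u v \<longrightarrow> u = v"
    and all: "above F c = vertices F"
  shows "c = roots F"
proof
  show roots: "roots F \<subseteq> c"
  proof
    fix r assume r: "r \<in> roots F"
    then obtain u where u: "u \<in> c" "prefix u r"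
      using all roots_subset_vertices unfolding above_def by blast
    from u c obtain i q where "u = i # q" by (meson subsetD vertex_ConsE)
    with u r show "r \<in> c" unfolding roots_def by auto
  qed
  show "c \<subseteq> roots F"
  proof
    fix v assume "v \<in> c"
    with c obtain i q where v: "v = i # q" and "[i] \<in> roots F" by (meson subsetD vertex_ConsE)
    moreover have "prefix [i] v" using v by simp
    ultimately have "[i] = v" using roots antichain \<open>v \<in> c\<close> by blast
    with \<open>[i] \<in> roots F\<close> show "v \<in> roots F" by simp
  qed
qed

section \<open>Left-admissible cuts are the cuts at initial segments\<close>

abbreviation cut_at :: "forest \<Rightarrow> nat \<Rightarrow> nat list set" where
  "cut_at F k \<equiv> prefix_minimal (set (take k (hl_enum F)))"

lemma above_cut_at: "above F (cut_at F k) = set (take k (hl_enum F))"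
proof (rule above_prefix_minimal)
  show "set (take k (hl_enum F)) \<subseteq> vertices F"
    using set_take_subset set_hl_enum by metis
qed (rule take_hl_enum_upward_closed)

lemma left_admissible_imp_cut_at:
  assumes "left_admissible F c"
  shows "\<exists>k\<in>{1..<num_vertices F}. c = cut_at F k"
proof -
  have c: "c \<subseteq> vertices F" "c \<noteq> {}" "\<forall>u\<in>c. \<forall>v\<in>c. prefix u v \<longrightarrow> u = v" "c \<noteq> roots F"
    using assms unfolding left_admissible_def admissible_def by auto
  obtain ss k where ss: "distinct ss" "set ss = vertices F" "sorted_wrt geq_hl ss"
    and ab: "above F c = set (take k ss)"
    using assms unfolding left_admissible_def by blast
  from ss have "ss = hl_enum F" by (rule hl_enum_unique)
  define k' where "k' = min k (num_vertices F)"
  have ab': "above F c = set (take k' (hl_enum F))"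
    using ab \<open>ss = hl_enum F\<close> by (simp add: k'_def length_hl_enum min_def)
  have "c \<subseteq> above F c" using c(1) unfolding above_def by auto
  with c(2) ab' have "k' \<noteq> 0" by auto
  moreover have "k' \<noteq> num_vertices F"
  proof
    assume "k' = num_vertices F"
    then have "above F c = vertices F" using ab' by (simp add: length_hl_enum set_hl_enum)
    with c(1,3,4) above_eq_vertices_imp_roots show False by blast
  qed
  moreover have "c = cut_at F k'"
    using prefix_minimal_above[OF c(1,3)] ab' by simp
  ultimately show ?thesis unfolding k'_def by force
qed

lemma left_admissible_cut_at:
  assumes k: "1 \<le> k" "k < num_vertices F"
  shows "left_admissible F (cut_at F k)"
proof -
  let ?c = "cut_at F k"
  have ab: "above F ?c = set (take k (hl_enum F))" by (rule above_cut_at)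
  have card_ab: "card (above F ?c) = k"
    unfolding ab card_set_take_hl_enum using k by simp
  have "?c \<subseteq> set (take k (hl_enum F))" by (auto simp: prefix_minimal_def)
  also have "\<dots> \<subseteq> vertices F" using set_take_subset[of k "hl_enum F"] by (simp add: set_hl_enum)
  finally have "?c \<subseteq> vertices F" .
  moreover have "?c \<noteq> {}"
  proof
    assume "?c = {}"
    then have "above F ?c = {}" by (simp add: above_def)
    with card_ab k show False by simp
  qed
  moreover have "?c \<noteq> roots F"
  proof
    assume "?c = roots F"
    then have "card (above F ?c) = num_vertices F"
      using distinct_card[OF distinct_hl_enum, of F] by (simp add: above_roots set_hl_enum length_hl_enum)
    with card_ab k show False by simp
  qed
  moreover have "\<exists>ss j. distinct ss \<and> set ss = vertices F \<and> sorted_wrt geq_hl ss \<and>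
      above F ?c = set (take j ss)"
    by (intro exI[of _ "hl_enum F"] exI[of _ k])
      (simp add: ab distinct_hl_enum sorted_hl_enum set_hl_enum)
  ultimately show ?thesis
    unfolding left_admissible_def admissible_def by (intro conjI prefix_minimal_antichain)
qed

lemma Adm_l_eq_cut_at_image: "Adm_l F = cut_at F ` {1..<num_vertices F}"
  unfolding Adm_l_def using left_admissible_imp_cut_at left_admissible_cut_at by fastforce

lemma inj_on_cut_at: "inj_on (cut_at F) {..num_vertices F}"
proof
  fix a b assume "a \<in> {..num_vertices F}" "b \<in> {..num_vertices F}" "cut_at F a = cut_at F b"
  then show "a = b" using above_cut_at card_set_take_hl_enum by (metis atMost_iff min.absorb1)
qed

lemma Pc_Rc_cut_at:
  assumes "k \<le> num_vertices F"
  shows "(Pc F (cut_at F k), Rc F (cut_at F k)) = splits F ! k"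
proof -
  have "\<forall>v\<in>set (post [] 0 F). v \<in> set (take k (hl_enum F)) \<longleftrightarrow> v \<in> set (take k (post [] 0 F))"
    by (simp add: hl_enum_def)
  from restr_post_initial_segment[OF assms this] show ?thesis
    unfolding Pc_def Rc_def above_cut_at by (simp add: prod_eq_iff)
qed

theorem proposition10:
  fixes D :: "forest \<Rightarrow> 'k::field HH" and F :: forest
  assumes "is_coproduct D"
    and "F \<noteq> []"
  shows "lin D (basis F) =
           (\<Sum>c\<in>Adm_l F. tens (basis (Pc F c)) (basis (Rc F c)))
           + tens (basis F) hone + tens hone (basis F)"
proof -
  let ?n = "num_vertices F"
  have "0 < ?n" using \<open>F \<noteq> []\<close> by (cases F rule: splits.cases) auto
  have "(\<Sum>c\<in>Adm_l F. tens (basis (Pc F c)) (basis (Rc F c)) :: 'k HH)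
      = (\<Sum>k\<in>{1..<?n}. basis (splits F ! k))"
    unfolding Adm_l_eq_cut_at_image
    by (subst sum.reindex) (auto intro: inj_on_subset[OF inj_on_cut_at] simp: Pc_Rc_cut_at[symmetric])
  moreover have "{..<Suc ?n} = insert 0 (insert ?n {1..<?n})" using \<open>0 < ?n\<close> by auto
  then have "(sum_list (map basis (splits F)) :: 'k HH)
      = basis (splits F ! 0) + basis (splits F ! ?n) + (\<Sum>k\<in>{1..<?n}. basis (splits F ! k))"
    using \<open>0 < ?n\<close> by (simp add: sum_list_sum_nth length_splits atLeast0LessThan add.assoc)
  ultimately show ?thesis
    using coproduct_basis_eq_splits[OF assms(1)]
    by (simp add: nth_splits_0 nth_splits_num_vertices hone_def ac_simps)
qed

end
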